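(* Let $m,b\ge1$, $V=(\mathbb{F}_2)^{mb}$, let $\mathbf M\in\mathrm{GL}(V)$ have order $t$, and define $\alpha:V\to(\mathbb{F}_2)^{2^m bt}$ by $\alpha(v)=(\varepsilon(v),\varepsilon(\mathbf Mv),\dots,\varepsilon(\mathbf M^{t-1}v))$. Then $2^m b-(b-1)\le\dim_{\mathbb{F}_2}\langle\alpha(V)\rangle\le(2^m b-(b-1))t$.
   Context: Identify $(\mathbb{F}_2)^m$ with $\mathbb{F}_{2^m}=\mathbb{F}_2[x]/(p)$ for a primitive polynomial $p$ of degree $m$, with primitive element $\gamma$ (a root of $p$). Let $e_1,\dots,e_{2^m}$ be the standard basis of $(\mathbb{F}_2)^{2^m}$ and define $\varepsilon':\mathbb{F}_{2^m}\to(\mathbb{F}_2)^{2^m}$ by $\varepsilon'(0)=e_1$, $\varepsilon'(\gamma^i)=e_{i+1}$ for $1\le i\le2^m-1$. Writing $v\in V$ as $(v_1,\dots,v_b)$ with $v_j\in(\mathbb{F}_2)^m$, set $\varepsilon(v)=(\varepsilon'(v_1),\dots,\varepsilon'(v_b))\in(\mathbb{F}_2)^{2^m b}$. $\langle S\rangle$ denotes the $\mathbb{F}_2$-linear span. *)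

theory Defs
  imports "HOL-Library.Z2" "HOL-Library.Function_Algebras" "HOL-Computational_Algebra.Computational_Algebra"
begin

(* F_2 is the type bit. Vectors of (F_2)^N are functions nat => bit vanishing
   at indices >= N (coordinates are 0-based). *)

definition Vsp :: "nat \<Rightarrow> (nat \<Rightarrow> bit) set" where
  "Vsp N = {v. \<forall>i\<ge>N. v i = 0}"

definition vscale :: "bit \<Rightarrow> (nat \<Rightarrow> bit) \<Rightarrow> (nat \<Rightarrow> bit)" where
  "vscale c v = (\<lambda>i. c * v i)"

definition vadd :: "(nat \<Rightarrow> bit) \<Rightarrow> (nat \<Rightarrow> bit) \<Rightarrow> (nat \<Rightarrow> bit)" where
  "vadd u w = (\<lambda>i. u i + w i)"

definition primitive_poly :: "nat \<Rightarrow> bit poly \<Rightarrow> bool" where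
  "primitive_poly m p \<longleftrightarrow> degree p = m \<and> irreducible p \<and>
     [:0, 1:] ^ (2^m - 1) mod p = 1 \<and>
     (\<forall>k. 0 < k \<and> k < 2^m - 1 \<longrightarrow> [:0, 1:] ^ k mod p \<noteq> 1)"

(* identification (F_2)^m = F_2[x]/(p): (v_0,...,v_{m-1}) |-> sum v_j x^j
   (residues mod p represented by polynomials of degree < m) *)
definition field_of_vec :: "nat \<Rightarrow> (nat \<Rightarrow> bit) \<Rightarrow> bit poly" where
  "field_of_vec m v = (\<Sum>j<m. monom (v j) j)"

(* epsilon' : F_{2^m} -> (F_2)^{2^m}; 0 |-> e_1 (index 0), gamma^i |-> e_{i+1} (index i),
   1 <= i <= 2^m - 1 *)
definition eps' :: "nat \<Rightarrow> bit poly \<Rightarrow> (nat \<Rightarrow> bit) \<Rightarrow> (nat \<Rightarrow> bit)" where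
  "eps' m p v = (\<lambda>k. if field_of_vec m v = 0 then of_bool (k = 0)
      else of_bool (1 \<le> k \<and> k \<le> 2^m - 1 \<and> [:0, 1:] ^ k mod p = field_of_vec m v))"

definition eps :: "nat \<Rightarrow> nat \<Rightarrow> bit poly \<Rightarrow> (nat \<Rightarrow> bit) \<Rightarrow> (nat \<Rightarrow> bit)" where
  "eps m b p v = (\<lambda>i. if i < 2^m * b
      then eps' m p (\<lambda>j. if j < m then v ((i div 2^m) * m + j) else 0) (i mod 2^m)
      else 0)"

definition alpha :: "nat \<Rightarrow> nat \<Rightarrow> bit poly \<Rightarrow> ((nat \<Rightarrow> bit) \<Rightarrow> (nat \<Rightarrow> bit)) \<Rightarrow> nat
    \<Rightarrow> (nat \<Rightarrow> bit) \<Rightarrow> (nat \<Rightarrow> bit)" where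
  "alpha m b p M t v = (\<lambda>i. if i < 2^m * b * t
      then eps m b p ((M ^^ (i div (2^m * b))) v) (i mod (2^m * b))
      else 0)"

end

theory Submission
  imports Defs
begin

text \<open>
  Every block of eps(v) is a unit vector e_k with k < 2^m the discrete logarithm of the block
  (k = 0 for the zero block), so alpha(v) is one-hot: each of its b t blocks of length
  P = 2^m carries exactly one 1. All such vectors lie in the span of the one-hot vector with
  every 1 at offset 0 and of the b t (P - 1) vectors e_(jP+k) + e_(jP), which gives the upper
  bound 1 + b t (P - 1). Conversely every k < P occurs, so on the first b blocks, where
  alpha(v) = eps(v) because M^0 = id, every one-hot pattern is realised; 1 + b (P - 1) suitable
  sums of these vectors each own a coordinate on which all the others vanish, hence are
  independent.
\<close>

lemma UNIV_bit: "(UNIV :: bit set) = {0, 1}"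
  by (auto intro: bit.exhaust)

lemma finite_UNIV_bit: "finite (UNIV :: bit set)"
  and card_UNIV_bit: "card (UNIV :: bit set) = 2"
  by (simp_all add: UNIV_bit)

lemma primitive_polyD:
  assumes "primitive_poly m p"
  shows "degree p = m" "p \<noteq> 0" "[:0, 1:] ^ (2^m - 1) mod p = 1"
    "\<And>k. 0 < k \<Longrightarrow> k < 2^m - 1 \<Longrightarrow> [:0, 1:] ^ k mod p \<noteq> 1"
  using assms unfolding primitive_poly_def by auto

lemma not_dvd_power_if_power_mod_eq_1:
  fixes x p :: "'a :: euclidean_semiring_cancel"
  assumes unit: "x ^ n mod p = 1" and "n \<ge> 1"
  shows "\<not> p dvd x ^ k"
proof
  assume "p dvd x ^ k"
  moreover have "x ^ k dvd x ^ (n * k)"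
    using assms(2) by (simp add: le_imp_power_dvd)
  ultimately have "p dvd x ^ (n * k)"
    by (rule dvd_trans)
  have "1 mod p = 1"
    using unit by (metis mod_mod_trivial)
  have "x ^ (n * k) mod p = (x ^ n mod p) ^ k mod p"
    by (simp add: power_mult power_mod)
  also have "\<dots> = 1"
    using unit \<open>1 mod p = 1\<close> by simp
  finally show False
    using \<open>p dvd x ^ (n * k)\<close> by simp
qed

lemma inj_on_powers_mod:
  fixes x p :: "'a :: euclidean_semiring_cancel"
  assumes "x ^ n mod p = 1" and order: "\<And>k. 0 < k \<Longrightarrow> k < n \<Longrightarrow> x ^ k mod p \<noteq> 1"
  shows "inj_on (\<lambda>k. x ^ k mod p) {1..n}"
proof -
  have "k = k'" if "k \<in> {1..n}" "k' \<in> {1..n}" "k \<le> k'"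
    and eq: "x ^ k mod p = x ^ k' mod p" for k k'
  proof (rule ccontr)
    assume "k \<noteq> k'"
    have "x ^ n mod p = (x ^ k * x ^ (n - k)) mod p"
      using that(1) by (simp flip: power_add)
    also have "\<dots> = (x ^ k' * x ^ (n - k)) mod p"
      using eq by (metis mod_mult_left_eq)
    also have "\<dots> = (x ^ n * x ^ (k' - k)) mod p"
      using that(1-3) by (simp add: add.commute flip: power_add)
    also have "\<dots> = x ^ (k' - k) mod p"
      using assms(1) by (metis mod_mult_left_eq mult_1)
    finally have "x ^ (k' - k) mod p = 1"
      using assms(1) by simp
    moreover have "0 < k' - k" "k' - k < n"
      using that(1-3) \<open>k \<noteq> k'\<close> by auto
    ultimately show False
      using order by blast
  qed
  then show ?thesis
    by (intro inj_onI) (metis nat_le_linear)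
qed

lemma card_polys_degree_less:
  assumes "finite (UNIV :: 'a :: zero set)"
  shows "finite {q :: 'a poly. degree q < m}
    \<and> card {q :: 'a poly. degree q < m} \<le> card (UNIV :: 'a set) ^ m"
proof -
  let ?coeffs = "\<lambda>q :: 'a poly. restrict (coeff q) {..<m}"
  have inj: "inj_on ?coeffs {q. degree q < m}"
  proof (rule inj_onI)
    fix q q' assume "q \<in> {q. degree q < m}" "q' \<in> {q. degree q < m}" "?coeffs q = ?coeffs q'"
    then have "coeff q i = coeff q' i" for i
      by (cases "i < m") (auto simp: coeff_eq_0 dest: fun_cong[of _ _ i])
    then show "q = q'" by (simp add: poly_eq_iff)
  qed
  have into: "?coeffs ` {q. degree q < m} \<subseteq> PiE {..<m} (\<lambda>_. UNIV)"
    by (simp add: image_subset_iff restrict_PiE_iff)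
  have fin: "finite (PiE {..<m} (\<lambda>_. UNIV :: 'a set))"
    using assms by (simp add: finite_PiE)
  show ?thesis
    using card_inj_on_le[OF inj into fin] finite_imageD[OF finite_subset[OF into fin] inj]
    by (simp add: card_PiE)
qed

lemma powers_mod_primitive_poly:
  assumes "primitive_poly m p" "m \<ge> 1"
  shows "(\<lambda>k. [:0, 1:] ^ k mod p) ` {1..2^m - 1} = {q. q \<noteq> 0 \<and> degree q < m}"
proof -
  let ?powers = "(\<lambda>k. [:0, 1:] ^ k mod p) ` {1..2^m - 1}"
  let ?R = "{q :: bit poly. q \<noteq> 0 \<and> degree q < m}"
  have unit: "[:0, 1:] ^ (2^m - 1) mod p = 1"
    and order: "\<And>k. 0 < k \<Longrightarrow> k < 2^m - 1 \<Longrightarrow> [:0, 1:] ^ k mod p \<noteq> 1"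
    using primitive_polyD[OF assms(1)] by blast+
  have "2^m - 1 \<ge> (1::nat)"
    using one_less_power[of "2::nat" m] assms(2) by simp
  then have sub: "?powers \<subseteq> ?R"
    using not_dvd_power_if_power_mod_eq_1[OF unit] degree_mod_less primitive_polyD(1,2)[OF assms(1)]
    by fastforce
  have "finite {q :: bit poly. degree q < m}" "card {q :: bit poly. degree q < m} \<le> 2^m"
    using card_polys_degree_less[where 'a = bit, OF finite_UNIV_bit, of m]
    by (simp_all add: card_UNIV_bit)
  moreover have "?R = {q. degree q < m} - {0}"
    by auto
  moreover have "0 \<in> {q :: bit poly. degree q < m}"
    using assms(2) by simp
  ultimately have "finite ?R" "card ?R \<le> 2^m - 1"
    by (simp_all add: card_Diff_singleton)
  moreover have "card ?powers = 2^m - 1"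
    using card_image[OF inj_on_powers_mod[OF unit order]] by simp
  ultimately show ?thesis
    using card_subset_eq[OF _ sub] card_mono[OF _ sub] by (metis le_antisym)
qed

lemma degree_field_of_vec_less: "m \<ge> 1 \<Longrightarrow> degree (field_of_vec m w) < m"
  unfolding field_of_vec_def
  by (intro degree_sum_less) (auto intro: le_less_trans[OF degree_monom_le])

lemma field_of_vec_coeff: "degree q < m \<Longrightarrow> field_of_vec m (coeff q) = q"
  unfolding field_of_vec_def
  using poly_as_sum_of_monoms'[of q "m - 1"] by (simp add: lessThan_Suc_atMost[symmetric])

lemma field_of_vec_cong: "(\<And>j. j < m \<Longrightarrow> w j = w' j) \<Longrightarrow> field_of_vec m w = field_of_vec m w'"
  unfolding field_of_vec_def by (rule sum.cong) auto

definition unit_vec :: "nat \<Rightarrow> nat \<Rightarrow> bit" where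
  "unit_vec k = (\<lambda>i. of_bool (i = k))"

lemma inj_unit_vec: "inj unit_vec"
  by (rule injI) (metis unit_vec_def of_bool_eq_iff)

text \<open>Index 0 stands for the zero residue (matching eps'(0) = e_1), not for gamma^0 = 1.\<close>

definition power_residue :: "bit poly \<Rightarrow> nat \<Rightarrow> bit poly" where
  "power_residue p k = (if k = 0 then 0 else [:0, 1:] ^ k mod p)"

lemma degree_power_residue_less:
  assumes "primitive_poly m p" "m \<ge> 1"
  shows "degree (power_residue p k) < m"
  using degree_mod_less[of p "[:0, 1:] ^ k"] primitive_polyD(1,2)[OF assms(1)] assms(2)
  by (cases "[:0, 1:] ^ k mod p = 0") (auto simp: power_residue_def)

lemma eps'_eq_unit_vec:
  assumes "primitive_poly m p" "m \<ge> 1" "k < 2^m" "field_of_vec m w = power_residue p k"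
  shows "eps' m p w = unit_vec k"
proof (cases "k = 0")
  case True
  then show ?thesis
    using assms(4) by (simp add: eps'_def unit_vec_def power_residue_def)
next
  case False
  have "k \<in> {1..2^m - 1}"
    using False assms(3) by simp
  then have "[:0, 1:] ^ k mod p \<in> {q. q \<noteq> 0 \<and> degree q < m}"
    unfolding powers_mod_primitive_poly[OF assms(1,2), symmetric] by (rule imageI)
  then have "[:0, 1:] ^ k mod p \<noteq> 0"
    by simp
  moreover have "(1 \<le> r \<and> r \<le> 2^m - 1 \<and> [:0, 1:] ^ r mod p = [:0, 1:] ^ k mod p) \<longleftrightarrow> r = k" for r
    using inj_onD[OF inj_on_powers_mod[OF primitive_polyD(3,4)[OF assms(1)]], of r k]
      \<open>k \<in> {1..2^m - 1}\<close> by auto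
  ultimately show ?thesis
    using assms(4) False by (simp add: eps'_def unit_vec_def power_residue_def)
qed

lemma field_of_vec_eq_power_residue:
  assumes "primitive_poly m p" "m \<ge> 1"
  shows "\<exists>k<2^m. field_of_vec m w = power_residue p k"
proof (cases "field_of_vec m w = 0")
  case True
  then show ?thesis by (intro exI[of _ 0]) (simp add: power_residue_def)
next
  case False
  then have "field_of_vec m w \<in> (\<lambda>k. [:0, 1:] ^ k mod p) ` {1..2^m - 1}"
    using powers_mod_primitive_poly[OF assms] degree_field_of_vec_less[OF assms(2)] by blast
  then obtain k where "k \<in> {1..2^m - 1}" "field_of_vec m w = [:0, 1:] ^ k mod p"
    by blast
  then show ?thesis
    by (intro exI[of _ k]) (auto simp: power_residue_def)
qed

definition eps'_index :: "nat \<Rightarrow> bit poly \<Rightarrow> (nat \<Rightarrow> bit) \<Rightarrow> nat" where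
  "eps'_index m p w = (THE k. eps' m p w = unit_vec k)"

lemma eps'_index_eqI: "eps' m p w = unit_vec k \<Longrightarrow> eps'_index m p w = k"
  unfolding eps'_index_def by (rule the_equality) (use inj_unit_vec in \<open>auto dest: injD\<close>)

lemma eps'_index:
  assumes "primitive_poly m p" "m \<ge> 1"
  shows "eps' m p w = unit_vec (eps'_index m p w)" "eps'_index m p w < 2^m"
  using field_of_vec_eq_power_residue[OF assms, of w] eps'_eq_unit_vec[OF assms] eps'_index_eqI
  by metis+

interpretation VS: vector_space vscale
  by unfold_locales (auto simp: vscale_def fun_eq_iff algebra_simps)

lemma self_add_eq_zero: "(x :: nat \<Rightarrow> bit) + x = 0"
  by (simp add: fun_eq_iff)

definition one_hot :: "nat \<Rightarrow> nat \<Rightarrow> (nat \<Rightarrow> nat) \<Rightarrow> nat \<Rightarrow> bit" where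
  "one_hot P n \<kappa> = (\<lambda>i. of_bool (i < n * P \<and> i mod P = \<kappa> (i div P)))"

lemma block_index_less:
  fixes c k n P :: nat
  assumes "c < n" "k < P"
  shows "c * P + k < n * P"
proof -
  have "c * P + k < Suc c * P"
    using assms(2) by simp
  also have "\<dots> \<le> n * P"
    using assms(1) by (intro mult_le_mono1) simp
  finally show ?thesis .
qed

lemma one_hot_at:
  assumes "c < n" "k < P"
  shows "one_hot P n \<kappa> (c * P + k) = of_bool (k = \<kappa> c)"
  using block_index_less[OF assms] assms(2) by (simp add: one_hot_def)

lemma one_hot_Suc:
  assumes "\<kappa> n < P"
  shows "one_hot P (Suc n) \<kappa> = one_hot P n \<kappa> + unit_vec (n * P + \<kappa> n)"
proof
  fix i
  show "one_hot P (Suc n) \<kappa> i = (one_hot P n \<kappa> + unit_vec (n * P + \<kappa> n)) i"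
  proof (cases "i < n * P")
    case True
    then show ?thesis by (auto simp: one_hot_def unit_vec_def)
  next
    case False
    then obtain r where "i = n * P + r" by (metis le_add_diff_inverse not_less)
    with assms show ?thesis by (auto simp: one_hot_def unit_vec_def)
  qed
qed

lemma one_hot_add_one_hot_zero_in_span:
  assumes "\<forall>j<n. \<kappa> j < P"
  shows "one_hot P n \<kappa> + one_hot P n (\<lambda>_. 0)
    \<in> VS.span ((\<lambda>(j, k). unit_vec (j * P + k) + unit_vec (j * P)) ` ({..<n} \<times> {1..<P}))"
  using assms
proof (induction n)
  case 0
  then show ?case by (simp add: one_hot_def VS.span_zero zero_fun_def)
next
  case (Suc n)
  let ?D = "\<lambda>n. (\<lambda>(j, k). unit_vec (j * P + k) + unit_vec (j * P)) ` ({..<n} \<times> {1..<P})"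
  have old: "one_hot P n \<kappa> + one_hot P n (\<lambda>_. 0) \<in> VS.span (?D (Suc n))"
    using Suc VS.span_mono[of "?D n" "?D (Suc n)"] by fastforce
  have new: "unit_vec (n * P + \<kappa> n) + unit_vec (n * P) \<in> VS.span (?D (Suc n))"
  proof (cases "\<kappa> n = 0")
    case True
    then show ?thesis by (simp add: self_add_eq_zero VS.span_zero)
  next
    case False
    then show ?thesis
      using Suc.prems by (intro VS.span_base) force
  qed
  have split: "one_hot P (Suc n) \<kappa> + one_hot P (Suc n) (\<lambda>_. 0)
    = (one_hot P n \<kappa> + one_hot P n (\<lambda>_. 0)) + (unit_vec (n * P + \<kappa> n) + unit_vec (n * P))"
  proof -
    have "\<kappa> n < P" "0 < P"
      using Suc.prems by auto
    then show ?thesis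
      by (simp only: one_hot_Suc add_0 ac_simps)
  qed
  show ?case
    unfolding split by (rule VS.span_add[OF old new])
qed

lemma dim_one_hots_le:
  assumes "X \<subseteq> one_hot P n ` {\<kappa>. \<forall>j<n. \<kappa> j < P}"
  shows "VS.dim X \<le> 1 + n * (P - 1)"
proof -
  define D where "D = (\<lambda>(j, k). unit_vec (j * P + k) + unit_vec (j * P)) ` ({..<n} \<times> {1..<P})"
  define W where "W = insert (one_hot P n (\<lambda>_. 0)) D"
  have span: "X \<subseteq> VS.span W"
  proof
    fix x assume "x \<in> X"
    then obtain \<kappa> where "\<forall>j<n. \<kappa> j < P" "x = one_hot P n \<kappa>"
      using assms by blast
    then have "x + one_hot P n (\<lambda>_. 0) \<in> VS.span W"
      using one_hot_add_one_hot_zero_in_span VS.span_mono[of D W]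
      unfolding D_def W_def by blast
    moreover have "one_hot P n (\<lambda>_. 0) \<in> VS.span W"
      unfolding W_def by (intro VS.span_base insertI1)
    moreover have "x = (x + one_hot P n (\<lambda>_. 0)) + one_hot P n (\<lambda>_. 0)"
      by (simp only: add.assoc self_add_eq_zero add_0_right)
    ultimately show "x \<in> VS.span W"
      by (metis VS.span_add)
  qed
  have "finite D" "card D \<le> n * (P - 1)"
    unfolding D_def using card_image_le[of "{..<n} \<times> {1..<P}"]
    by (simp_all add: card_cartesian_product)
  then have "finite W" "card W \<le> 1 + n * (P - 1)"
    unfolding W_def by (simp_all add: card_insert_if)
  then show ?thesis
    using VS.dim_le_card[OF span] by simp
qed

lemma card_le_dim_if_private_coordinates:
  fixes f :: "'i \<Rightarrow> nat \<Rightarrow> bit" and \<iota> :: "'i \<Rightarrow> nat"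
  assumes "finite X" "f ` I \<subseteq> VS.span X"
    and coord: "\<And>a b. a \<in> I \<Longrightarrow> b \<in> I \<Longrightarrow> f a (\<iota> b) = of_bool (a = b)"
  shows "card I \<le> VS.dim X"
proof -
  have inj: "inj_on f I"
    by (rule inj_onI) (metis coord of_bool_eq_iff)
  have "VS.independent (f ` I)"
  proof
    assume "VS.dependent (f ` I)"
    then obtain a where a: "a \<in> I" "f a \<in> VS.span (f ` I - {f a})"
      unfolding VS.dependent_def by blast
    have "VS.span (f ` I - {f a}) \<subseteq> {w. w (\<iota> a) = 0}"
      by (rule VS.span_minimal) (auto simp: coord a(1) VS.subspace_def vscale_def)
    then show False
      using a coord[of a a] by auto
  qed
  moreover obtain B where B: "B \<subseteq> X" "X \<subseteq> VS.span B" "card B = VS.dim X"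
    using VS.basis_exists by metis
  moreover have "f ` I \<subseteq> VS.span B"
    using assms(2) VS.span_mono[OF B(2)] by (simp add: VS.span_span)
  ultimately have "card (f ` I) \<le> VS.dim X"
    using VS.independent_span_bound finite_subset[OF B(1) assms(1)] by metis
  then show ?thesis
    by (simp add: card_image[OF inj])
qed

lemma dim_one_hots_ge:
  assumes "finite X" "n \<ge> 1" "P \<ge> 1"
    and hits: "\<forall>\<kappa>. (\<forall>j<n. \<kappa> j < P) \<longrightarrow> (\<exists>x\<in>X. \<forall>i<n * P. x i = one_hot P n \<kappa> i)"
  shows "1 + n * (P - 1) \<le> VS.dim X"
proof -
  from hits have "\<forall>\<kappa>. \<exists>x. (\<forall>j<n. \<kappa> j < P) \<longrightarrow> x \<in> X \<and> (\<forall>i<n * P. x i = one_hot P n \<kappa> i)"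
    by blast
  then obtain sel where sel: "\<And>\<kappa>. \<forall>j<n. \<kappa> j < P \<Longrightarrow> sel \<kappa> \<in> X \<and> (\<forall>i<n * P. sel \<kappa> i = one_hot P n \<kappa> i)"
    by (metis choice)
  txt \<open>For c > 0, adding the all-zero pattern cancels every block but block c, leaving
    e_(cP+k) + e_(cP); so among the f (c', k') only f (c, k) is nonzero at cP + k.\<close>
  define \<delta> where "\<delta> c k = (\<lambda>j. if j = c then k else 0)" for c k :: nat
  define I where "I = {(c, k). c < n \<and> k < P \<and> (c = 0 \<or> 1 \<le> k)}"
  define f where "f = (\<lambda>(c, k). sel (\<delta> c k) + (if c = 0 then 0 else sel (\<lambda>_. 0)))"
  have admissible: "\<forall>j<n. \<delta> c k j < P" "\<forall>j<n. (\<lambda>_. 0::nat) j < P" if "(c, k) \<in> I" for c k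
    using that assms(3) by (auto simp: I_def \<delta>_def)
  have "f ` I \<subseteq> VS.span X"
  proof
    fix y assume "y \<in> f ` I"
    then obtain c k where ck: "(c, k) \<in> I" "y = f (c, k)" by auto
    then have "sel (\<delta> c k) \<in> X" "sel (\<lambda>_. 0) \<in> X"
      using sel[OF admissible(1)] sel[OF admissible(2)] by blast+
    then show "y \<in> VS.span X"
      using ck(2) by (simp add: f_def VS.span_base VS.span_add VS.span_zero)
  qed
  moreover have "f a ((\<lambda>(c, k). c * P + k) b) = of_bool (a = b)" if "a \<in> I" "b \<in> I" for a b
  proof -
    obtain c k c' k' where ab: "a = (c, k)" "b = (c', k')" by fastforce
    have "c' < n" "k' < P"
      using that(2) ab(2) by (auto simp: I_def)
    then have "c' * P + k' < n * P"
      by (rule block_index_less)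
    moreover have "(c, k) \<in> I"
      using that(1) ab(1) by simp
    ultimately have "sel (\<delta> c k) (c' * P + k') = of_bool (k' = \<delta> c k c')"
      "sel (\<lambda>_. 0) (c' * P + k') = of_bool (k' = 0)"
      using sel[OF admissible(1)] sel[OF admissible(2)] one_hot_at[OF \<open>c' < n\<close> \<open>k' < P\<close>] by auto
    then have "f a (c' * P + k') = of_bool (k' = \<delta> c k c') + (if c = 0 then 0 else of_bool (k' = 0))"
      using ab(1) by (simp add: f_def)
    then show ?thesis
      using that ab by (auto simp: I_def \<delta>_def)
  qed
  ultimately have "card I \<le> VS.dim X"
    using card_le_dim_if_private_coordinates[OF assms(1), of f I "\<lambda>(c, k). c * P + k"] by blast
  moreover have "card I = 1 + n * (P - 1)"
  proof -
    have "I = ({0} \<times> {..<P}) \<union> ({1..<n} \<times> {1..<P})"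
      using assms(2) by (auto simp: I_def)
    moreover have "({0} \<times> {..<P}) \<inter> ({1..<n} \<times> {1..<P}) = {}"
      by auto
    ultimately have "card I = P + (n - 1) * (P - 1)"
      by (simp add: card_Un_disjoint card_cartesian_product)
    also have "\<dots> = 1 + n * (P - 1)"
      using assms(2,3) by (cases n; cases P) simp_all
    finally show ?thesis .
  qed
  ultimately show ?thesis by simp
qed

definition block :: "nat \<Rightarrow> (nat \<Rightarrow> bit) \<Rightarrow> nat \<Rightarrow> nat \<Rightarrow> bit" where
  "block m v c = (\<lambda>j. if j < m then v (c * m + j) else 0)"

lemma eps_eq_one_hot:
  assumes "primitive_poly m p" "m \<ge> 1"
  shows "eps m b p v = one_hot (2^m) b (\<lambda>c. eps'_index m p (block m v c))"
proof
  fix i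
  have "eps' m p (block m v (i div 2^m)) (i mod 2^m) = of_bool (i mod 2^m = eps'_index m p (block m v (i div 2^m)))"
    using eps'_index(1)[OF assms] by (simp add: unit_vec_def)
  then show "eps m b p v i = one_hot (2^m) b (\<lambda>c. eps'_index m p (block m v c)) i"
    by (simp add: eps_def one_hot_def block_def mult.commute)
qed

lemma alpha_eq_one_hot:
  assumes "primitive_poly m p" "m \<ge> 1"
  shows "alpha m b p M t v
    = one_hot (2^m) (b * t) (\<lambda>j. eps'_index m p (block m ((M ^^ (j div b)) v) (j mod b)))"
proof
  fix i
  let ?P = "2^m :: nat"
  let ?\<kappa> = "\<lambda>j. eps'_index m p (block m ((M ^^ (j div b)) v) (j mod b))"
  have "i mod (?P * b) div ?P = i div ?P mod b" "i mod (?P * b) mod ?P = i mod ?P"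
    "i div (?P * b) = i div ?P div b"
    by (simp_all add: mod_mult2_eq div_mult2_eq)
  moreover have "i mod (?P * b) < b * ?P" if "i < ?P * b * t"
    using that by (cases "b = 0") (simp_all add: mult.commute)
  ultimately have "alpha m b p M t v i = of_bool (i < ?P * b * t \<and> i mod ?P = ?\<kappa> (i div ?P))"
    by (simp add: alpha_def eps_eq_one_hot[OF assms] one_hot_def)
  then show "alpha m b p M t v i = one_hot ?P (b * t) ?\<kappa> i"
    by (simp add: one_hot_def ac_simps)
qed

lemma alpha_first_block:
  assumes "t > 0" "i < 2^m * b"
  shows "alpha m b p M t v i = eps m b p v i"
proof -
  have "2^m * b \<le> 2^m * b * t"
    using assms(1) by simp
  with assms(2) have "i < 2^m * b * t"
    by (rule less_le_trans)
  then show ?thesis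
    using assms(2) by (simp add: alpha_def)
qed

lemma exists_vector_with_eps'_indices:
  assumes "primitive_poly m p" "m \<ge> 1" "\<forall>c<b. \<kappa> c < 2^m"
  shows "\<exists>v\<in>Vsp (m * b). \<forall>c<b. eps'_index m p (block m v c) = \<kappa> c"
proof
  let ?v = "\<lambda>i. if i < m * b then coeff (power_residue p (\<kappa> (i div m))) (i mod m) else 0"
  show "?v \<in> Vsp (m * b)"
    by (simp add: Vsp_def)
  show "\<forall>c<b. eps'_index m p (block m ?v c) = \<kappa> c"
  proof (intro allI impI)
    fix c assume "c < b"
    have "c * m + j < m * b" if "j < m" for j
      using block_index_less[OF \<open>c < b\<close> that] by (simp add: mult.commute)
    then have "field_of_vec m (block m ?v c) = field_of_vec m (coeff (power_residue p (\<kappa> c)))"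
      using assms(2) by (intro field_of_vec_cong) (simp add: block_def)
    also have "\<dots> = power_residue p (\<kappa> c)"
      by (rule field_of_vec_coeff[OF degree_power_residue_less[OF assms(1,2)]])
    finally show "eps'_index m p (block m ?v c) = \<kappa> c"
      using eps'_eq_unit_vec[OF assms(1,2)] assms(3) \<open>c < b\<close> eps'_index_eqI by blast
  qed
qed

lemma finite_Vsp: "finite (Vsp N)"
  by (rule finite_subset[OF _ finite_set_of_finite_funs[of "{..<N}" UNIV 0]])
    (auto simp: Vsp_def finite_UNIV_bit)

lemma alpha_hits_one_hots:
  assumes "primitive_poly m p" "m \<ge> 1" "t > 0" "\<forall>c<b. \<kappa> c < 2^m"
  shows "\<exists>x\<in>alpha m b p M t ` Vsp (m * b). \<forall>i<b * 2^m. x i = one_hot (2^m) b \<kappa> i"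
proof -
  obtain v where v: "v \<in> Vsp (m * b)" "\<forall>c<b. eps'_index m p (block m v c) = \<kappa> c"
    using exists_vector_with_eps'_indices[OF assms(1,2,4)] by blast
  have "alpha m b p M t v i = one_hot (2^m) b \<kappa> i" if "i < b * 2^m" for i
  proof -
    have "alpha m b p M t v i = one_hot (2^m) b (\<lambda>c. eps'_index m p (block m v c)) i"
      using alpha_first_block[OF assms(3)] that by (simp add: eps_eq_one_hot[OF assms(1,2)] mult.commute)
    also have "\<dots> = one_hot (2^m) b \<kappa> i"
      using that v(2) by (simp add: one_hot_def less_mult_imp_div_less)
    finally show ?thesis .
  qed
  then show ?thesis
    using v(1) by blast
qed

theorem mainTheorem8:
  fixes m b t :: nat and p :: "bit poly" and M :: "(nat \<Rightarrow> bit) \<Rightarrow> (nat \<Rightarrow> bit)"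
  assumes "m \<ge> 1" and "b \<ge> 1"
    and "primitive_poly m p"
    and "bij_betw M (Vsp (m * b)) (Vsp (m * b))"
    and "\<forall>u\<in>Vsp (m * b). \<forall>w\<in>Vsp (m * b). M (vadd u w) = vadd (M u) (M w)"
    and "\<forall>c. \<forall>u\<in>Vsp (m * b). M (vscale c u) = vscale c (M u)"
    and "t > 0" and "\<forall>v\<in>Vsp (m * b). (M ^^ t) v = v"
    and "\<forall>k. 0 < k \<and> k < t \<longrightarrow> (\<exists>v\<in>Vsp (m * b). (M ^^ k) v \<noteq> v)"
  shows "2^m * b - (b - 1) \<le> vector_space.dim vscale (alpha m b p M t ` Vsp (m * b))
    \<and> vector_space.dim vscale (alpha m b p M t ` Vsp (m * b)) \<le> (2^m * b - (b - 1)) * t"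
proof -
  let ?X = "alpha m b p M t ` Vsp (m * b)"
  obtain q where "2^m = Suc q"
    using not0_implies_Suc[of "2^m :: nat"] by auto
  then have count: "2^m * b - (b - 1) = 1 + b * (2^m - 1)"
    using assms(2) by (cases b) simp_all
  have lower: "1 + b * (2^m - 1) \<le> VS.dim ?X"
    using dim_one_hots_ge[OF finite_imageI[OF finite_Vsp] assms(2)]
      alpha_hits_one_hots[OF assms(3,1,7)] by simp
  have upper: "VS.dim ?X \<le> 1 + b * t * (2^m - 1)"
    by (intro dim_one_hots_le)
      (auto simp: alpha_eq_one_hot[OF assms(3,1)] eps'_index(2)[OF assms(3,1)] intro!: imageI)
  have slack: "1 + b * t * (2^m - 1) \<le> (1 + b * (2^m - 1)) * t"
    using assms(7) by (cases t) (simp_all add: algebra_simps)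
  show ?thesis
    unfolding count using lower order_trans[OF upper slack] by blast
qed

end
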